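(* Let $\boldsymbol{M}$ be a weight sequence with $\gamma(\boldsymbol{M})>0$. Then $\mathcal{M}(C_{\{\boldsymbol{M}\}}(0,\infty))\subset\Lambda_{\{\boldsymbol{M}\}}$ if and only if $\boldsymbol{M}$ satisfies $\operatorname{(dc)}$.
   Context: Sequences are of positive reals indexed by $\mathbb{N}_0$; $m_p=M_{p+1}/M_p$. Weight sequence: $M_0=1$, $M_p^2\le M_{p-1}M_{p+1}$ ($p\ge1$), $m_p\to\infty$. $\operatorname{(dc)}$: there are $C_0>0$, $H>1$ with $M_{p+1}\le C_0H^{p+1}M_p$ for all $p$. A sequence $(c_p)$ is almost increasing if $c_p\le ac_q$ for all $q\ge p$, some $a>0$; $\gamma(\boldsymbol{M})=\sup\{\mu>0:(m_p/(p+1)^\mu)_p\text{ almost increasing}\}\in[0,\infty]$. $C_{\{\boldsymbol{M}\}}(0,\infty)$ is the space of continuous $\varphi$ on $(0,\infty)$ with $\sup_p\sup_{x>0}x^p|\varphi(x)|/(h^pM_p)<\infty$ for some $h>0$. $\Lambda_{\{\boldsymbol{M}\}}$ is the space of complex sequences $(c_p)$ with $\sup_p|c_p|/(h^pM_p)<\infty$ for some $h>0$. $\mathcal{M}(\varphi)=(\int_0^\infty x^p\varphi(x)\,dx)_{p\in\mathbb{N}_0}$. *)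

theory Defs
  imports "HOL-Analysis.Analysis"
begin

definition quot_seq :: "(nat \<Rightarrow> real) \<Rightarrow> nat \<Rightarrow> real" where
  "quot_seq M p = M (Suc p) / M p"

definition weight_sequence :: "(nat \<Rightarrow> real) \<Rightarrow> bool" where
  "weight_sequence M \<longleftrightarrow>
     (\<forall>p. M p > 0) \<and> M 0 = 1 \<and>
     (\<forall>p\<ge>1. (M p)^2 \<le> M (p - 1) * M (p + 1)) \<and>
     filterlim (quot_seq M) at_top sequentially"

definition dc :: "(nat \<Rightarrow> real) \<Rightarrow> bool" where
  "dc M \<longleftrightarrow> (\<exists>C0>0. \<exists>H>1. \<forall>p. M (Suc p) \<le> C0 * H ^ (Suc p) * M p)"

definition almost_increasing :: "(nat \<Rightarrow> real) \<Rightarrow> bool" where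
  "almost_increasing c \<longleftrightarrow> (\<exists>a>0. \<forall>p q. p \<le> q \<longrightarrow> c p \<le> a * c q)"

text \<open>gamma(M) = sup of admissible mu > 0, with the convention sup {} = 0 (value in [0,\<infinity>]).\<close>
definition gamma_idx :: "(nat \<Rightarrow> real) \<Rightarrow> ereal" where
  "gamma_idx M = Sup (insert 0 (ereal ` {\<mu>. \<mu> > 0 \<and>
      almost_increasing (\<lambda>p. quot_seq M p / (real (p + 1)) powr \<mu>)}))"

definition C_Roumieu :: "(nat \<Rightarrow> real) \<Rightarrow> (real \<Rightarrow> complex) set" where
  "C_Roumieu M = {\<phi>. continuous_on {0<..} \<phi> \<and>
     (\<exists>h>0. \<exists>C. \<forall>p. \<forall>x>0. x ^ p * norm (\<phi> x) \<le> C * h ^ p * M p)}"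

definition Lambda_Roumieu :: "(nat \<Rightarrow> real) \<Rightarrow> (nat \<Rightarrow> complex) set" where
  "Lambda_Roumieu M = {c. \<exists>h>0. \<exists>C. \<forall>p. norm (c p) \<le> C * h ^ p * M p}"

definition moment_map :: "(real \<Rightarrow> complex) \<Rightarrow> nat \<Rightarrow> complex" where
  "moment_map \<phi> p = set_lebesgue_integral lborel {0<..} (\<lambda>x. complex_of_real (x ^ p) * \<phi> x)"

end

theory Submission
  imports Defs "HOL-Probability.Sinc_Integral"
begin

(* If (dc) holds, then M (p + 2) <= C H^p M p, so the decay bounds of order p and p + 2 of a
   function in C_{M} dominate x^p |phi x| by a multiple of 1 / (1 + x^2) and give the p-th
   moment the bound O((h H)^p M p).
   Conversely, test the inclusion on phi x = inf_q M q / x^q, which lies in C_{M} with h = 1.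
   Since gamma(M) > 0 there is an L with 2 m_p <= m_N for N = L (p + 1) - 1; on [m_p, 2 m_p]
   the quotients m_k / x are at most 1 for k <= p, at least 1/2 for p <= k and at least 1
   for N <= k, so phi x >= 2^-N M (p + 1) / x^(p + 1) there.  Integrating over [m_p, 2 m_p]
   gives M (p + 1) <= 2^(L (p + 1)) |moment p|, and the bound C h^p M p on the moments
   becomes (dc). *)

lemma moment_map_bounded:
  fixes \<phi> :: "real \<Rightarrow> complex"
  assumes cont: "continuous_on {0<..} \<phi>"
    and bound_p: "\<And>x. x > 0 \<Longrightarrow> x ^ p * norm (\<phi> x) \<le> A"
    and bound_p2: "\<And>x. x > 0 \<Longrightarrow> x ^ (p + 2) * norm (\<phi> x) \<le> B"
  shows "set_integrable lborel {0<..} (\<lambda>x. complex_of_real (x ^ p) * \<phi> x)"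
    and "norm (moment_map \<phi> p) \<le> 2 * (A + B)"
proof -
  define g where "g x = (A + B) * (1 / (1 + x\<^sup>2))" for x :: real
  have "set_integrable lborel {0<..} (\<lambda>x::real. 1 / (1 + x\<^sup>2))"
    using integrable_I0i_1_div_plus_square unfolding interval_lebesgue_integrable_def
    by (simp add: einterval_def zero_ereal_def greaterThan_def)
  then have g_integrable: "set_integrable lborel {0<..} g"
    unfolding g_def by (rule set_integrable_mult_right)
  have "(LINT x:{0<..}|lborel. 1 / (1 + x\<^sup>2)) = pi / 2"
    using LBINT_I0i_1_div_plus_square unfolding interval_lebesgue_integral_def
    by (simp add: einterval_def zero_ereal_def greaterThan_def)
  then have g_integral: "(LINT x:{0<..}|lborel. g x) = (A + B) * (pi / 2)"
    unfolding g_def by (simp only: set_integral_mult_right)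
  have measurable: "set_borel_measurable lborel {0<..} (\<lambda>x. complex_of_real (x ^ p) * \<phi> x)"
    unfolding set_borel_measurable_def measurable_lborel2
    by (rule borel_measurable_continuous_on_indicator) (auto intro!: continuous_intros cont)
  have dominated: "norm (complex_of_real (x ^ p) * \<phi> x) \<le> g x" if "x > 0" for x
  proof -
    have "x ^ p * norm (\<phi> x) * (1 + x\<^sup>2) = x ^ p * norm (\<phi> x) + x ^ (p + 2) * norm (\<phi> x)"
      by (simp add: algebra_simps power_add power2_eq_square)
    also have "\<dots> \<le> A + B" using bound_p[OF that] bound_p2[OF that] by simp
    finally have "x ^ p * norm (\<phi> x) \<le> (A + B) / (1 + x\<^sup>2)"
      by (simp add: field_simps add_pos_nonneg)
    then show ?thesis using that by (simp add: g_def norm_mult norm_power)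
  qed
  show integrable: "set_integrable lborel {0<..} (\<lambda>x. complex_of_real (x ^ p) * \<phi> x)"
    using dominated
    by (intro set_integrable_bound[OF g_integrable measurable])
       (auto intro!: AE_I2 order_trans[OF _ abs_ge_self])
  have "0 \<le> A" "0 \<le> B"
    using bound_p[of 1] bound_p2[of 1] by (auto intro: order_trans[OF norm_ge_zero])
  then have "(A + B) * pi \<le> (A + B) * 4"
    using pi_less_4 by (intro mult_left_mono) auto
  have "norm (moment_map \<phi> p) \<le> (LINT x:{0<..}|lborel. norm (complex_of_real (x ^ p) * \<phi> x))"
    unfolding moment_map_def by (rule set_integral_norm_bound[OF integrable])
  also have "\<dots> \<le> (LINT x:{0<..}|lborel. g x)"
    using dominated by (intro set_integral_mono[OF set_integrable_norm[OF integrable] g_integrable]) auto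
  also have "\<dots> \<le> 2 * (A + B)"
    using g_integral \<open>(A + B) * pi \<le> (A + B) * 4\<close> by simp
  finally show "norm (moment_map \<phi> p) \<le> 2 * (A + B)" .
qed

lemma moment_map_ge_interval:
  fixes f :: "real \<Rightarrow> real"
  assumes integrable: "set_integrable lborel {0<..} (\<lambda>x. complex_of_real (x ^ p) * complex_of_real (f x))"
    and nonneg: "\<And>x. x > 0 \<Longrightarrow> 0 \<le> f x"
    and "0 < a" "a \<le> b"
    and lower: "\<And>x. a \<le> x \<Longrightarrow> x \<le> b \<Longrightarrow> K \<le> x ^ p * f x"
  shows "K * (b - a) \<le> norm (moment_map (\<lambda>x. complex_of_real (f x)) p)"
proof -
  have real_integrable: "set_integrable lborel {0<..} (\<lambda>x. x ^ p * f x)"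
  proof -
    have "(\<lambda>x. indicator {0<..} x *\<^sub>R (complex_of_real (x ^ p) * complex_of_real (f x)))
        = (\<lambda>x. complex_of_real (indicator {0<..} x * (x ^ p * f x)))"
      by (simp add: scaleR_conv_of_real)
    then have "complex_integrable lborel (\<lambda>x. complex_of_real (indicator {0<..} x * (x ^ p * f x)))"
      using integrable unfolding set_integrable_def by simp
    then show ?thesis
      unfolding set_integrable_def complex_of_real_integrable_eq by simp
  qed
  have box: "(\<lambda>x. indicator {0<..} x *\<^sub>R (K * indicator {a..b} x)) = (\<lambda>x. K * indicator {a..b} x)"
    using \<open>0 < a\<close> by (auto simp: indicator_def fun_eq_iff)
  have box_integrable: "set_integrable lborel {0<..} (\<lambda>x. K * indicator {a..b} x)"
    using \<open>a \<le> b\<close> unfolding set_integrable_def box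
    by (intro integrable_mult_right integrable_real_indicator) auto
  have "K * (b - a) = (LINT x:{0<..}|lborel. K * indicator {a..b} x)"
    using \<open>a \<le> b\<close> unfolding set_lebesgue_integral_def box by simp
  also have "\<dots> \<le> (LINT x:{0<..}|lborel. x ^ p * f x)"
    using lower nonneg
    by (intro set_integral_mono[OF box_integrable real_integrable])
       (auto simp: indicator_def)
  also have "\<dots> \<le> norm (complex_of_real (LINT x:{0<..}|lborel. x ^ p * f x))"
    by simp
  also have "complex_of_real (LINT x:{0<..}|lborel. x ^ p * f x) = moment_map (\<lambda>x. complex_of_real (f x)) p"
    unfolding moment_map_def of_real_mult[symmetric] by (rule set_integral_complex_of_real[symmetric])
  finally show ?thesis .
qed

lemma le_two_power_mult_if_dec_then_half:
  fixes a :: "nat \<Rightarrow> real"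
  assumes nonneg: "\<And>k. 0 \<le> a k"
    and dec: "\<And>k. k < n \<Longrightarrow> a (Suc k) \<le> a k"
    and half: "\<And>k. n \<le> k \<Longrightarrow> a k \<le> 2 * a (Suc k)"
  shows "a n \<le> 2 ^ q * a q"
proof (cases "q \<le> n")
  case True
  have "a n \<le> a q"
    using True by (induction n rule: dec_induct) (auto intro: order_trans[OF dec])
  also have "\<dots> \<le> 2 ^ q * a q" using nonneg[of q] by (simp add: mult_le_cancel_right1)
  finally show ?thesis .
next
  case False
  then have "n \<le> q" by simp
  then have "a n \<le> 2 ^ (q - n) * a q"
  proof (induction q rule: dec_induct)
    case (step k)
    have "2 ^ (k - n) * a k \<le> 2 ^ (k - n) * (2 * a (Suc k))"
      using half[OF step(1)] by simp
    also have "\<dots> = 2 ^ (Suc k - n) * a (Suc k)"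
      using step(1) by (simp add: Suc_diff_le)
    finally show ?case using step(3) by linarith
  qed simp
  also have "\<dots> \<le> 2 ^ q * a q"
    using nonneg[of q] by (intro mult_right_mono power_increasing) auto
  finally show ?thesis .
qed

lemma continuous_on_Min_atMost:
  fixes f :: "nat \<Rightarrow> 'a::topological_space \<Rightarrow> 'b::linorder_topology"
  assumes "\<And>q. continuous_on S (f q)"
  shows "continuous_on S (\<lambda>x. Min ((\<lambda>q. f q x) ` {..N}))"
proof (induction N)
  case (Suc N)
  have "Min ((\<lambda>q. f q x) ` {..Suc N}) = min (f (Suc N) x) (Min ((\<lambda>q. f q x) ` {..N}))" for x
    by (simp add: atMost_Suc Min_insert)
  then show ?case using Suc assms by (simp add: continuous_on_min)
qed (simp add: assms)

lemma gamma_idx_pos_imp_almost_increasing: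
  assumes "gamma_idx M > 0"
  obtains \<mu> where "\<mu> > 0" "almost_increasing (\<lambda>p. quot_seq M p / real (p + 1) powr \<mu>)"
proof -
  let ?exponents = "{\<mu>. \<mu> > 0 \<and> almost_increasing (\<lambda>p. quot_seq M p / real (p + 1) powr \<mu>)}"
  have "?exponents \<noteq> {}"
  proof
    assume no_exponent: "?exponents = {}"
    have "gamma_idx M = 0" unfolding gamma_idx_def no_exponent by simp
    with assms show False by simp
  qed
  then show thesis using that by blast
qed

lemma almost_increasing_powr_doubling:
  fixes c :: "nat \<Rightarrow> real"
  assumes "\<mu> > 0" and c_nonneg: "\<And>p. 0 \<le> c p"
    and "almost_increasing (\<lambda>p. c p / real (p + 1) powr \<mu>)"
  obtains L :: nat where "L \<ge> 1" "\<And>p. 2 * c p \<le> c (L * Suc p - 1)"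
proof -
  obtain a where "a > 0"
    and ai: "\<And>p q. p \<le> q \<Longrightarrow> c p / real (p + 1) powr \<mu> \<le> a * (c q / real (q + 1) powr \<mu>)"
    using assms(3) unfolding almost_increasing_def by blast
  define L where "L = nat \<lceil>(2 * a) powr (1 / \<mu>)\<rceil> + 1"
  have "L \<ge> 1" unfolding L_def by simp
  have "(2 * a) powr (1 / \<mu>) \<le> real L" unfolding L_def by linarith
  then have "((2 * a) powr (1 / \<mu>)) powr \<mu> \<le> real L powr \<mu>"
    using \<open>\<mu> > 0\<close> by (intro powr_mono2) auto
  then have L_large: "2 * a \<le> real L powr \<mu>" using \<open>\<mu> > 0\<close> \<open>a > 0\<close> by (simp add: powr_powr)
  have "2 * c p \<le> c (L * Suc p - 1)" for p
  proof -
    define N where "N = L * Suc p - 1"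
    have "real (N + 1) = real L * real (p + 1)"
      unfolding N_def using \<open>L \<ge> 1\<close> by (simp add: of_nat_diff algebra_simps)
    then have N_Suc: "real (N + 1) powr \<mu> = real L powr \<mu> * real (p + 1) powr \<mu>"
      by (simp add: powr_mult)
    have "p \<le> N" unfolding N_def using \<open>L \<ge> 1\<close>
      by (metis Suc_le_eq diff_Suc_1 diff_le_mono mult_1 mult_le_mono1)
    have "c p / real (p + 1) powr \<mu> \<le> a * (c N / (real L powr \<mu> * real (p + 1) powr \<mu>))"
      using ai[OF \<open>p \<le> N\<close>] unfolding N_Suc .
    then have "c p * real L powr \<mu> \<le> a * c N"
      using \<open>L \<ge> 1\<close> by (simp add: field_simps)
    moreover have "2 * a * c p \<le> real L powr \<mu> * c p"
      using L_large c_nonneg[of p] by (intro mult_right_mono) auto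
    ultimately have "a * (2 * c p) \<le> a * c N" by (simp add: mult_ac)
    then show ?thesis unfolding N_def using \<open>a > 0\<close> by simp
  qed
  with \<open>L \<ge> 1\<close> show thesis using that by blast
qed

lemma dcI:
  assumes M_nonneg: "\<And>p. 0 \<le> M p" and "0 \<le> C" "0 \<le> H"
    and bound: "\<And>p. M (Suc p) \<le> C * H ^ p * M p"
  shows "dc M"
  unfolding dc_def
proof (intro exI conjI allI)
  fix p
  have "H ^ p \<le> (H + 2) ^ Suc p"
    using \<open>0 \<le> H\<close> by (intro order_trans[OF power_mono power_increasing]) auto
  then have "C * H ^ p * M p \<le> (C + 1) * (H + 2) ^ Suc p * M p"
    using \<open>0 \<le> C\<close> \<open>0 \<le> H\<close> M_nonneg[of p] by (intro mult_right_mono mult_mono) auto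
  with bound show "M (Suc p) \<le> (C + 1) * (H + 2) ^ Suc p * M p" by (rule order_trans)
qed (use assms in auto)

lemma dc_imp_two_step_bound:
  assumes "dc M" and M_nonneg: "\<And>p. 0 \<le> M p"
  obtains C H where "H \<ge> 1" "\<And>p. M (p + 2) \<le> C * H ^ p * M p"
proof -
  from \<open>dc M\<close> obtain C0 H0 where "C0 > 0" "H0 > 1"
    and step: "\<And>p. M (Suc p) \<le> C0 * H0 ^ Suc p * M p" unfolding dc_def by blast
  have "M (p + 2) \<le> C0\<^sup>2 * H0 ^ 3 * (H0\<^sup>2) ^ p * M p" for p
  proof -
    have "M (p + 2) \<le> C0 * H0 ^ (p + 2) * M (Suc p)" using step[of "Suc p"] by simp
    also have "\<dots> \<le> C0 * H0 ^ (p + 2) * (C0 * H0 ^ Suc p * M p)"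
      using step[of p] \<open>C0 > 0\<close> \<open>H0 > 1\<close> by (intro mult_left_mono) auto
    also have "\<dots> = C0\<^sup>2 * (H0 ^ (p + 2) * H0 ^ Suc p) * M p"
      by (simp add: power2_eq_square mult_ac)
    also have "H0 ^ (p + 2) * H0 ^ Suc p = H0 ^ 3 * (H0\<^sup>2) ^ p"
    proof -
      have "p + 2 + Suc p = 3 + 2 * p" by simp
      then show ?thesis by (metis power_add power_mult)
    qed
    finally show ?thesis by (simp add: mult_ac)
  qed
  moreover have "H0\<^sup>2 \<ge> 1"
    using \<open>H0 > 1\<close> by (auto simp: one_le_power)
  ultimately show thesis using that by blast
qed

(* This is exp (- omega_M x) for the associated function omega_M of M. *)
definition weight_inf :: "(nat \<Rightarrow> real) \<Rightarrow> real \<Rightarrow> real" where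
  "weight_inf M x = (INF q. M q / x ^ q)"

context
  fixes M :: "nat \<Rightarrow> real"
  assumes ws: "weight_sequence M"
begin

lemma weight_sequence_pos: "0 < M p"
  using ws unfolding weight_sequence_def by blast

lemma quot_seq_pos: "0 < quot_seq M p"
  using weight_sequence_pos[of p] weight_sequence_pos[of "Suc p"] by (simp add: quot_seq_def)

lemma quot_seq_mono:
  assumes "p \<le> q" shows "quot_seq M p \<le> quot_seq M q"
  using assms
proof (induction q rule: dec_induct)
  case (step k)
  have "(M (Suc k))\<^sup>2 \<le> M k * M (Suc (Suc k))"
    using ws unfolding weight_sequence_def by (auto dest!: spec[of _ "Suc k"])
  then have "quot_seq M k \<le> quot_seq M (Suc k)"
    using weight_sequence_pos[of k] weight_sequence_pos[of "Suc k"]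
    by (simp add: quot_seq_def divide_simps power2_eq_square mult_ac)
  with step.IH show ?case by simp
qed simp

lemma quot_seq_unbounded:
  obtains N where "x < quot_seq M N"
proof -
  have "filterlim (quot_seq M) at_top sequentially"
    using ws unfolding weight_sequence_def by blast
  then have "eventually (\<lambda>n. x < quot_seq M n) sequentially"
    by (simp add: filterlim_at_top_dense)
  then show thesis using that by (metis eventually_sequentially order_refl)
qed

lemma weight_div_power_Suc: "M (Suc k) / x ^ Suc k = quot_seq M k / x * (M k / x ^ k)"
  using weight_sequence_pos[of k] by (simp add: quot_seq_def)

lemma moment_map_in_Lambda_Roumieu:
  assumes "dc M" and "\<phi> \<in> C_Roumieu M"
  shows "moment_map \<phi> \<in> Lambda_Roumieu M"
proof -
  from \<open>\<phi> \<in> C_Roumieu M\<close> obtain h C where cont: "continuous_on {0<..} \<phi>" and "h > 0"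
    and decay: "\<And>p x. x > 0 \<Longrightarrow> x ^ p * norm (\<phi> x) \<le> C * h ^ p * M p"
    unfolding C_Roumieu_def by blast
  obtain D H where "H \<ge> 1" and two_step: "\<And>p. M (p + 2) \<le> D * H ^ p * M p"
    using dc_imp_two_step_bound[OF \<open>dc M\<close>] weight_sequence_pos less_imp_le by metis
  have "0 \<le> C * M 0" using decay[of 1 0] by (auto intro: order_trans[OF norm_ge_zero])
  then have "0 \<le> C" using weight_sequence_pos[of 0] by (simp add: zero_le_mult_iff)
  define K where "K = 2 * C * (1 + h\<^sup>2 * D)"
  have "norm (moment_map \<phi> p) \<le> K * (h * H) ^ p * M p" for p
  proof -
    have hH: "h ^ p \<le> (h * H) ^ p"
      using \<open>h > 0\<close> \<open>H \<ge> 1\<close> by (intro power_mono) auto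
    have "norm (moment_map \<phi> p) \<le> 2 * (C * h ^ p * M p + C * h ^ (p + 2) * M (p + 2))"
      by (rule moment_map_bounded(2)[OF cont decay decay])
    also have "C * h ^ (p + 2) * M (p + 2) \<le> C * h ^ (p + 2) * (D * H ^ p * M p)"
      using two_step[of p] \<open>0 \<le> C\<close> \<open>h > 0\<close> by (intro mult_left_mono) auto
    also have "\<dots> = C * h\<^sup>2 * D * (h * H) ^ p * M p"
      by (simp add: power_add power_mult_distrib power2_eq_square mult_ac)
    also have "C * h ^ p * M p \<le> C * (h * H) ^ p * M p"
      using hH \<open>0 \<le> C\<close> weight_sequence_pos[of p] by (intro mult_right_mono mult_left_mono) auto
    finally show ?thesis by (simp add: K_def algebra_simps)
  qed
  moreover have "h * H > 0" using \<open>h > 0\<close> \<open>H \<ge> 1\<close> by simp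
  ultimately show ?thesis unfolding Lambda_Roumieu_def by blast
qed

lemma weight_inf_le:
  assumes "0 < x" shows "weight_inf M x \<le> M p / x ^ p"
  unfolding weight_inf_def
  using assms weight_sequence_pos
  by (intro cINF_lower bdd_belowI2[of _ 0]) (auto intro!: divide_nonneg_pos less_imp_le)

lemma weight_inf_eq_Min:
  assumes "0 < x" "x \<le> quot_seq M N"
  shows "weight_inf M x = (MIN q\<in>{..N}. M q / x ^ q)"
proof -
  define a where "a q = M q / x ^ q" for q
  have a_mono: "a N \<le> a q" if "N \<le> q" for q
    using that
  proof (induction q rule: dec_induct)
    case (step k)
    have "x \<le> quot_seq M k" using assms(2) quot_seq_mono[OF step(1)] by simp
    then have "a k \<le> a (Suc k)"
      using assms(1) weight_sequence_pos[of k] unfolding a_def weight_div_power_Suc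
      by (intro mult_le_cancel_right1[THEN iffD2]) (auto simp: field_simps)
    with step.IH show ?case by simp
  qed simp
  have "Inf (range a) = (MIN q\<in>{..N}. a q)"
  proof (rule cInf_eq_minimum)
    have "(MIN q\<in>{..N}. a q) \<in> a ` {..N}" by (rule Min_in) auto
    then show "(MIN q\<in>{..N}. a q) \<in> range a" by blast
    fix y assume "y \<in> range a"
    then obtain q where "y = a q" by blast
    show "(MIN q\<in>{..N}. a q) \<le> y"
    proof (cases "q \<le> N")
      case True then show ?thesis using \<open>y = a q\<close> by simp
    next
      case False
      then have "(MIN q\<in>{..N}. a q) \<le> a N" by simp
      also have "\<dots> \<le> y" using False a_mono[of q] \<open>y = a q\<close> by simp
      finally show ?thesis .
    qed
  qed
  then show ?thesis unfolding weight_inf_def a_def .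
qed

lemma weight_inf_pos:
  assumes "0 < x" shows "0 < weight_inf M x"
proof -
  obtain N where "x < quot_seq M N" using quot_seq_unbounded .
  then have "weight_inf M x = (MIN q\<in>{..N}. M q / x ^ q)"
    by (intro weight_inf_eq_Min assms less_imp_le)
  also have "0 < \<dots>" using assms weight_sequence_pos by (simp add: Min_gr_iff)
  finally show ?thesis .
qed

lemma continuous_on_weight_inf: "continuous_on {0<..} (weight_inf M)"
proof -
  have "isCont (weight_inf M) x" if "0 < x" for x
  proof -
    obtain N where "x < quot_seq M N" using quot_seq_unbounded .
    then have "eventually (\<lambda>y. y \<in> {0<..<quot_seq M N}) (nhds x)"
      using that by (intro eventually_nhds_in_open) auto
    then have local_eq: "eventually (\<lambda>y. weight_inf M y = (MIN q\<in>{..N}. M q / y ^ q)) (nhds x)"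
      by eventually_elim (simp add: weight_inf_eq_Min)
    have "isCont (\<lambda>y. MIN q\<in>{..N}. M q / y ^ q) x"
      using continuous_on_Min_atMost[of "{0<..}" "\<lambda>q y. M q / y ^ q" N] that
      by (simp add: continuous_on_eq_continuous_at continuous_on_divide continuous_on_power)
    then show ?thesis using isCont_cong[OF local_eq] by simp
  qed
  then show ?thesis by (simp add: continuous_at_imp_continuous_on)
qed

lemma weight_inf_decay:
  assumes "0 < x" shows "x ^ p * norm (complex_of_real (weight_inf M x)) \<le> M p"
  using weight_inf_le[OF assms, of p] weight_inf_pos[OF assms] assms by (simp add: field_simps)

lemma weight_inf_in_C_Roumieu: "(\<lambda>x. complex_of_real (weight_inf M x)) \<in> C_Roumieu M"
proof -
  have "x ^ p * norm (complex_of_real (weight_inf M x)) \<le> 1 * 1 ^ p * M p" if "0 < x" for x p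
    using weight_inf_decay[OF that] by simp
  then show ?thesis
    unfolding C_Roumieu_def using continuous_on_weight_inf
    by (auto intro!: continuous_on_of_real exI[of _ 1])
qed

lemma weight_inf_lower_bound:
  assumes "quot_seq M p \<le> x" "x \<le> 2 * quot_seq M p" "x \<le> quot_seq M N"
  shows "M (Suc p) / x ^ Suc p \<le> 2 ^ N * weight_inf M x"
proof -
  have "0 < x" using assms(1) quot_seq_pos[of p] by simp
  define a where "a q = M q / x ^ q" for q
  have a_nonneg: "0 \<le> a k" for k
    unfolding a_def using \<open>0 < x\<close> weight_sequence_pos[of k] by simp
  have "a (Suc p) \<le> 2 ^ q * a q" for q
  proof (rule le_two_power_mult_if_dec_then_half[OF a_nonneg])
    show "a (Suc k) \<le> a k" if "k < Suc p" for k
    proof -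
      have "quot_seq M k / x \<le> 1"
        using that quot_seq_mono[of k p] assms(1) \<open>0 < x\<close> by simp
      then show ?thesis unfolding a_def weight_div_power_Suc
        using \<open>0 < x\<close> weight_sequence_pos[of k] quot_seq_pos[of k]
        by (intro mult_left_le_one_le) auto
    qed
    show "a k \<le> 2 * a (Suc k)" if "Suc p \<le> k" for k
    proof -
      have "x \<le> 2 * quot_seq M k" using that quot_seq_mono[of p k] assms(2) by simp
      then show ?thesis unfolding a_def weight_div_power_Suc
        using \<open>0 < x\<close> weight_sequence_pos[of k] by (simp add: field_simps)
    qed
  qed
  also have "2 ^ q * a q \<le> 2 ^ N * a q" if "q \<le> N" for q
    using that a_nonneg[of q] by (intro mult_right_mono power_increasing) auto
  finally have "a (Suc p) / 2 ^ N \<le> a q" if "q \<le> N" for q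
    using that by (simp add: pos_divide_le_eq mult.commute)
  then have "a (Suc p) / 2 ^ N \<le> weight_inf M x"
    unfolding weight_inf_eq_Min[OF \<open>0 < x\<close> assms(3)] a_def[symmetric] by simp
  then have "a (Suc p) \<le> 2 ^ N * weight_inf M x" by (simp add: pos_divide_le_eq mult.commute)
  then show ?thesis by (simp only: a_def)
qed

lemma M_Suc_le_moment_weight_inf:
  assumes "2 * quot_seq M p \<le> quot_seq M N"
  shows "M (Suc p) \<le> 2 ^ Suc N * norm (moment_map (\<lambda>x. complex_of_real (weight_inf M x)) p)"
proof -
  define m where "m = quot_seq M p"
  have "0 < m" unfolding m_def by (rule quot_seq_pos)
  define K where "K = M (Suc p) / (2 ^ Suc N * m)"
  have "set_integrable lborel {0<..}
      (\<lambda>x. complex_of_real (x ^ p) * complex_of_real (weight_inf M x))"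
    using continuous_on_of_real[OF continuous_on_weight_inf] weight_inf_decay weight_inf_decay
    by (rule moment_map_bounded(1))
  then have "K * (2 * m - m) \<le> norm (moment_map (\<lambda>x. complex_of_real (weight_inf M x)) p)"
  proof (rule moment_map_ge_interval)
    show "0 \<le> weight_inf M x" if "0 < x" for x using weight_inf_pos[OF that] by simp
    fix x assume "m \<le> x" "x \<le> 2 * m"
    then have "M (Suc p) / x ^ Suc p \<le> 2 ^ N * weight_inf M x"
      using assms unfolding m_def by (intro weight_inf_lower_bound) auto
    then have "M (Suc p) / (2 ^ N * x) \<le> x ^ p * weight_inf M x"
      using \<open>0 < m\<close> \<open>m \<le> x\<close> by (simp add: field_simps)
    moreover have "K \<le> M (Suc p) / (2 ^ N * x)"
      unfolding K_def using \<open>0 < m\<close> \<open>m \<le> x\<close> \<open>x \<le> 2 * m\<close> weight_sequence_pos[of "Suc p"]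
      by (intro divide_left_mono) auto
    ultimately show "K \<le> x ^ p * weight_inf M x" by linarith
  qed (use \<open>0 < m\<close> in auto)
  moreover have "K * (2 * m - m) = M (Suc p) / 2 ^ Suc N"
    unfolding K_def using \<open>0 < m\<close> by simp
  ultimately have "M (Suc p) / 2 ^ Suc N \<le> norm (moment_map (\<lambda>x. complex_of_real (weight_inf M x)) p)"
    by simp
  then show ?thesis by (simp add: pos_divide_le_eq mult.commute)
qed

lemma dc_if_moment_map_subset:
  assumes "gamma_idx M > 0" and subset: "moment_map ` C_Roumieu M \<subseteq> Lambda_Roumieu M"
  shows "dc M"
proof -
  obtain \<mu> where "\<mu> > 0" "almost_increasing (\<lambda>p. quot_seq M p / real (p + 1) powr \<mu>)"
    using gamma_idx_pos_imp_almost_increasing[OF assms(1)] .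
  moreover have "0 \<le> quot_seq M p" for p using quot_seq_pos[of p] by simp
  ultimately obtain L :: nat where "L \<ge> 1"
    and doubling: "\<And>p. 2 * quot_seq M p \<le> quot_seq M (L * Suc p - 1)"
    using almost_increasing_powr_doubling by blast
  have "moment_map (\<lambda>x. complex_of_real (weight_inf M x)) \<in> Lambda_Roumieu M"
    using subset weight_inf_in_C_Roumieu by blast
  then obtain h C where "h > 0"
    and moment_bound: "\<And>p. norm (moment_map (\<lambda>x. complex_of_real (weight_inf M x)) p) \<le> C * h ^ p * M p"
    unfolding Lambda_Roumieu_def by blast
  have "0 \<le> C * M 0" using moment_bound[of 0] by (auto intro: order_trans[OF norm_ge_zero])
  then have "0 \<le> C" using weight_sequence_pos[of 0] by (simp add: zero_le_mult_iff)
  have "M (Suc p) \<le> (2 ^ L * C) * (2 ^ L * h) ^ p * M p" for p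
  proof -
    have "Suc (L * Suc p - 1) = L * Suc p" using \<open>L \<ge> 1\<close> by simp
    then have "M (Suc p) \<le> 2 ^ (L * Suc p) * norm (moment_map (\<lambda>x. complex_of_real (weight_inf M x)) p)"
      using M_Suc_le_moment_weight_inf[OF doubling[of p]] by simp
    also have "\<dots> \<le> 2 ^ (L * Suc p) * (C * h ^ p * M p)"
      using moment_bound[of p] by (intro mult_left_mono) auto
    also have "(2::real) ^ (L * Suc p) = 2 ^ L * (2 ^ L) ^ p"
      by (simp only: power_mult power_Suc)
    also have "2 ^ L * (2 ^ L) ^ p * (C * h ^ p * M p) = (2 ^ L * C) * (2 ^ L * h) ^ p * M p"
      by (simp add: power_mult_distrib mult_ac)
    finally show ?thesis .
  qed
  moreover have "0 \<le> M p" for p using weight_sequence_pos[of p] by simp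
  moreover have "0 \<le> 2 ^ L * C" "0 \<le> 2 ^ L * h" using \<open>0 \<le> C\<close> \<open>h > 0\<close> by simp_all
  ultimately show ?thesis by (intro dcI[of M "2 ^ L * C" "2 ^ L * h"])
qed

end

theorem proposition3p3:
  fixes M :: "nat \<Rightarrow> real"
  assumes "weight_sequence M" and "gamma_idx M > 0"
  shows "moment_map ` C_Roumieu M \<subseteq> Lambda_Roumieu M \<longleftrightarrow> dc M"
  using dc_if_moment_map_subset[OF assms] moment_map_in_Lambda_Roumieu[OF assms(1)] by blast

end
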